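(* Let $M\ge 2$, let $k\in\{1,\dots,M\}$, and let $\mathbf V_1,\ldots,\mathbf V_M\in\mathbb C^{M\times M}$ be Hermitian positive definite matrices. For $\mathbf u\in\mathbb C^M$ and $\mathbf q\in\mathbb C^{M-1}$ define $$\mathbf T_k(\mathbf u,\mathbf q)=\mathbf I+\mathbf e_k(\mathbf u-\mathbf e_k)^{\mathsf H}+\bar{\mathbf E}_k\mathbf q^{*}\mathbf e_k^{\top},$$ $$\ell_2(\mathbf u,\mathbf q)=\sum_{m\neq k}(\mathbf e_m+q_m\mathbf e_k)^{\mathsf H}\mathbf V_m(\mathbf e_m+q_m\mathbf e_k)+\mathbf u^{\mathsf H}\mathbf V_k\mathbf u-2\log\left|\det\mathbf T_k(\mathbf u,\mathbf q)\right|,$$ and consider the problem $\min_{\mathbf u\in\mathbb C^M,\ \mathbf q\in\mathbb C^{M-1}}\ell_2(\mathbf u,\mathbf q)$. Then: (1) For a given $\mathbf q$, the optimal vector $\mathbf u^\star(\mathbf q)$ is $$\mathbf u^\star(\mathbf q)=\frac{\mathbf V_k^{-1}\tilde{\mathbf q}_k}{\sqrt{\tilde{\mathbf q}_k^{\mathsf H}\mathbf V_k^{-1}\tilde{\mathbf q}_k}}\,e^{j\theta},\qquad \tilde{\mathbf q}_k=\mathbf e_k-\bar{\mathbf E}_k\mathbf q^{*},$$ where $\theta\in[0,2\pi]$ is an arbitrary phase. (2) The optimal $\mathbf q^\star$ is the solution of $$\min_{\mathbf q\in\mathbb C^{M-1}}\ (\mathbf q+\mathbf A^{-1}\mathbf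 b)^{\mathsf H}\mathbf A(\mathbf q+\mathbf A^{-1}\mathbf b)-\log\!\left((\mathbf q-\mathbf C^{-1}\mathbf g)^{\mathsf H}\mathbf C(\mathbf q-\mathbf C^{-1}\mathbf g)+z\right),$$ where $\mathbf A=\operatorname{diag}(\mathbf e_k^\top\mathbf V_m\mathbf e_k)_{m\neq k}$, $\mathbf b=(\mathbf e_k^\top\mathbf V_m\mathbf e_m)_{m\neq k}\in\mathbb C^{M-1}$, $\mathbf C=\bar{\mathbf E}_k^\top(\mathbf V_k^{-1})^{*}\bar{\mathbf E}_k$, $\mathbf g=\bar{\mathbf E}_k^\top(\mathbf V_k^{-1})^{*}\mathbf e_k$, and $z=\mathbf e_k^\top(\mathbf V_k^{-1})^{*}\mathbf e_k-\mathbf g^{\mathsf H}\mathbf C^{-1}\mathbf g$.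
   Context: $\mathbf e_1,\dots,\mathbf e_M$ are the canonical basis vectors of $\mathbb C^M$, $\mathbf I$ is the $M\times M$ identity, and $\bar{\mathbf E}_k=[\mathbf e_1\ \cdots\ \mathbf e_{k-1}\ \mathbf e_{k+1}\ \cdots\ \mathbf e_M]$ is the $M\times(M-1)$ matrix of all canonical basis vectors except the $k$-th. The entries of $\mathbf q\in\mathbb C^{M-1}$ are indexed as $q_m$, $m\in\{1,\dots,M\}\setminus\{k\}$, in increasing order of $m$; vectors and diagonal matrices indexed by $m\neq k$ are ordered likewise. $\mathbf x^{*}$ denotes entrywise complex conjugation, $^{\mathsf H}$ conjugate transpose, $^\top$ transpose, and $j=\sqrt{-1}$. *)

theory Defs
  imports Complex_Main "Jordan_Normal_Form.Matrix" "Jordan_Normal_Form.Determinant"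
          "Jordan_Normal_Form.Gauss_Jordan_Elimination"
begin

(* Indices are 0-based: rows/columns 0..M-1, k < M (paper: 1..M). *)

definition cconj_mat :: "complex mat \<Rightarrow> complex mat" where
  "cconj_mat A = map_mat cnj A"

definition hadj :: "complex mat \<Rightarrow> complex mat" where
  "hadj A = transpose_mat (cconj_mat A)"

definition cconj_vec :: "complex vec \<Rightarrow> complex vec" where
  "cconj_vec v = map_vec cnj v"

definition colm :: "complex vec \<Rightarrow> complex mat" where
  "colm v = mat (dim_vec v) 1 (\<lambda>(i,j). v $ i)"

definition qform :: "complex vec \<Rightarrow> complex mat \<Rightarrow> complex" where
  "qform x V = cconj_vec x \<bullet> (V *\<^sub>v x)"

definition hermitian_pd :: "nat \<Rightarrow> complex mat \<Rightarrow> bool" where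
  "hermitian_pd M V \<longleftrightarrow> V \<in> carrier_mat M M \<and> hadj V = V \<and>
     (\<forall>x \<in> carrier_vec M. x \<noteq> 0\<^sub>v M \<longrightarrow> Re (qform x V) > 0)"

definition minv :: "complex mat \<Rightarrow> complex mat" where
  "minv A = the (mat_inverse A)"

(* the m-th index (m \<noteq> k) corresponding to position j of a vector in C^(M-1) *)
definition idx :: "nat \<Rightarrow> nat \<Rightarrow> nat" where
  "idx k j = (if j < k then j else Suc j)"

definition Ebar :: "nat \<Rightarrow> nat \<Rightarrow> complex mat" where
  "Ebar M k = mat M (M - 1) (\<lambda>(i,j). if i = idx k j then 1 else 0)"

(* entry q_m (m \<noteq> k) of q \<in> C^(M-1) *)
definition qent :: "nat \<Rightarrow> complex vec \<Rightarrow> nat \<Rightarrow> complex" where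
  "qent k q m = q $ (if m < k then m else m - 1)"

definition Tk :: "nat \<Rightarrow> nat \<Rightarrow> complex vec \<Rightarrow> complex vec \<Rightarrow> complex mat" where
  "Tk M k u q = 1\<^sub>m M + colm (unit_vec M k) * hadj (colm (u - unit_vec M k))
      + Ebar M k * colm (cconj_vec q) * transpose_mat (colm (unit_vec M k))"

definition ell2 :: "nat \<Rightarrow> nat \<Rightarrow> (nat \<Rightarrow> complex mat) \<Rightarrow> complex vec \<Rightarrow> complex vec \<Rightarrow> real" where
  "ell2 M k V u q =
     Re (\<Sum>m \<in> {0..<M} - {k}. qform (unit_vec M m + qent k q m \<cdot>\<^sub>v unit_vec M k) (V m))
     + Re (qform u (V k)) - 2 * ln (cmod (det (Tk M k u q)))"

definition qtil :: "nat \<Rightarrow> nat \<Rightarrow> complex vec \<Rightarrow> complex vec" where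
  "qtil M k q = unit_vec M k - Ebar M k *\<^sub>v cconj_vec q"

definition Amat :: "nat \<Rightarrow> nat \<Rightarrow> (nat \<Rightarrow> complex mat) \<Rightarrow> complex mat" where
  "Amat M k V = mat_diag (M - 1) (\<lambda>j. V (idx k j) $$ (k, k))"

definition bvec :: "nat \<Rightarrow> nat \<Rightarrow> (nat \<Rightarrow> complex mat) \<Rightarrow> complex vec" where
  "bvec M k V = vec (M - 1) (\<lambda>j. V (idx k j) $$ (k, idx k j))"

definition Cmat :: "nat \<Rightarrow> nat \<Rightarrow> (nat \<Rightarrow> complex mat) \<Rightarrow> complex mat" where
  "Cmat M k V = transpose_mat (Ebar M k) * cconj_mat (minv (V k)) * Ebar M k"

definition gvec :: "nat \<Rightarrow> nat \<Rightarrow> (nat \<Rightarrow> complex mat) \<Rightarrow> complex vec" where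
  "gvec M k V = transpose_mat (Ebar M k) *\<^sub>v (cconj_mat (minv (V k)) *\<^sub>v unit_vec M k)"

definition zval :: "nat \<Rightarrow> nat \<Rightarrow> (nat \<Rightarrow> complex mat) \<Rightarrow> complex" where
  "zval M k V = cconj_mat (minv (V k)) $$ (k, k)
     - qform (gvec M k V) (minv (Cmat M k V))"

definition fq :: "nat \<Rightarrow> nat \<Rightarrow> (nat \<Rightarrow> complex mat) \<Rightarrow> complex vec \<Rightarrow> real" where
  "fq M k V q =
     Re (qform (q + minv (Amat M k V) *\<^sub>v bvec M k V) (Amat M k V))
     - ln (Re (qform (q - minv (Cmat M k V) *\<^sub>v gvec M k V) (Cmat M k V) + zval M k V))"

end

theory Submission
  imports Defs
begin

(* For fixed q, det T_k(u,q) is the complex conjugate of qtil^H u, so ell2(u,q) is a term depending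
   only on q plus the barrier u^H V_k u - 2 ln|qtil^H u|.  By Cauchy-Schwarz in the inner product
   of V_k, |qtil^H u|^2 <= (u^H V_k u) (qtil^H V_k^-1 qtil), with equality exactly on the multiples of
   V_k^-1 qtil; together with ln x <= x - 1 (equality only at x = 1) this bounds the barrier below by
   1 - ln (qtil^H V_k^-1 qtil), and the bound is attained exactly at the multiples of V_k^-1 qtil
   with u^H V_k u = 1.  Hence q is optimal iff it minimises this partial minimum.  Completing the
   square in the diagonal matrix A, and expanding qtil^H V_k^-1 qtil = (e_k - Ebar_k q)^H
   (V_k^-1)^* (e_k - Ebar_k q) in terms of C, g and z, shows that the objective of (2) differs from
   the partial minimum by a constant. *)

section \<open>Complex conjugation and Hermitian matrices\<close>

lemma cconj_vec_dim [simp]: "dim_vec (cconj_vec x) = dim_vec x"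
  by (simp add: cconj_vec_def)

lemma cconj_vec_index [simp]: "i < dim_vec x \<Longrightarrow> cconj_vec x $ i = cnj (x $ i)"
  by (simp add: cconj_vec_def)

lemma cconj_vec_carrier [simp]: "cconj_vec x \<in> carrier_vec n \<longleftrightarrow> x \<in> carrier_vec n"
  unfolding carrier_vec_def by simp

lemma cconj_vec_cconj_vec [simp]: "cconj_vec (cconj_vec x) = x"
  by (rule eq_vecI) auto

lemma cconj_vec_zero [simp]: "cconj_vec (0\<^sub>v n) = 0\<^sub>v n"
  by (rule eq_vecI) auto

lemma cconj_unit_vec [simp]: "cconj_vec (unit_vec n i) = unit_vec n i"
  by (rule eq_vecI) (auto simp: unit_vec_def)

lemma cconj_vec_add:
  "x \<in> carrier_vec n \<Longrightarrow> y \<in> carrier_vec n \<Longrightarrow> cconj_vec (x + y) = cconj_vec x + cconj_vec y"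
  by (rule eq_vecI) auto

lemma cconj_vec_diff:
  "x \<in> carrier_vec n \<Longrightarrow> y \<in> carrier_vec n \<Longrightarrow> cconj_vec (x - y) = cconj_vec x - cconj_vec y"
  by (rule eq_vecI) auto

lemma cconj_vec_smult: "cconj_vec (a \<cdot>\<^sub>v x) = cnj a \<cdot>\<^sub>v cconj_vec x"
  by (rule eq_vecI) auto

lemma cnj_scalar_prod:
  "x \<in> carrier_vec n \<Longrightarrow> y \<in> carrier_vec n \<Longrightarrow> cnj (x \<bullet> y) = cconj_vec x \<bullet> cconj_vec y"
  by (auto simp: scalar_prod_def cnj_sum intro!: sum.cong)

lemma cnj_cscalar_prod:
  "x \<in> carrier_vec n \<Longrightarrow> y \<in> carrier_vec n \<Longrightarrow> cnj (cconj_vec x \<bullet> y) = cconj_vec y \<bullet> x"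
  by (simp add: cnj_scalar_prod[of _ n] comm_scalar_prod[of _ n])

lemma cconj_mult_mat_vec:
  "A \<in> carrier_mat n m \<Longrightarrow> x \<in> carrier_vec m \<Longrightarrow> cconj_vec (A *\<^sub>v x) = cconj_mat A *\<^sub>v cconj_vec x"
  by (rule eq_vecI) (auto simp: cconj_mat_def scalar_prod_def cnj_sum row_def intro!: sum.cong)

lemma cconj_mat_carrier: "A \<in> carrier_mat n m \<Longrightarrow> cconj_mat A \<in> carrier_mat n m"
  by (auto simp: cconj_mat_def)

lemma cconj_mat_mult:
  "A \<in> carrier_mat n m \<Longrightarrow> B \<in> carrier_mat m p \<Longrightarrow> cconj_mat (A * B) = cconj_mat A * cconj_mat B"
  by (rule eq_matI) (auto simp: cconj_mat_def scalar_prod_def cnj_sum row_def col_def intro!: sum.cong)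

lemma hadj_carrier: "A \<in> carrier_mat n m \<Longrightarrow> hadj A \<in> carrier_mat m n"
  by (auto simp: hadj_def cconj_mat_def)

lemma hadj_mult: "A \<in> carrier_mat n m \<Longrightarrow> B \<in> carrier_mat m p \<Longrightarrow> hadj (A * B) = hadj B * hadj A"
  unfolding hadj_def cconj_mat_mult by (rule transpose_mult) (auto simp: cconj_mat_def)

lemma hadj_one: "hadj (1\<^sub>m n) = 1\<^sub>m n"
  by (rule eq_matI) (auto simp: hadj_def cconj_mat_def)

lemma hermitian_cconj_mat: "A \<in> carrier_mat n n \<Longrightarrow> hadj A = A \<Longrightarrow> cconj_mat A = transpose_mat A"
  unfolding hadj_def by (metis transpose_transpose)

lemma hermitian_entry:
  "A \<in> carrier_mat n n \<Longrightarrow> hadj A = A \<Longrightarrow> i < n \<Longrightarrow> j < n \<Longrightarrow> A $$ (i, j) = cnj (A $$ (j, i))"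
  by (metis hadj_def cconj_mat_def index_map_mat(1) index_transpose_mat(1) carrier_matD
      index_map_mat(2) index_map_mat(3))

lemma hermitian_cscalar_prod_swap:
  assumes A: "A \<in> carrier_mat n n" "hadj A = A" and x: "x \<in> carrier_vec n" and y: "y \<in> carrier_vec n"
  shows "cconj_vec x \<bullet> (A *\<^sub>v y) = cconj_vec (A *\<^sub>v x) \<bullet> y"
proof -
  have "cconj_vec (A *\<^sub>v x) = transpose_mat A *\<^sub>v cconj_vec x"
    using cconj_mult_mat_vec[OF A(1) x] hermitian_cconj_mat[OF A] by simp
  thus ?thesis using transpose_vec_mult_scalar[OF A(1) y, of "cconj_vec x"] x by simp
qed

lemma qform_hermitian_real:
  assumes A: "A \<in> carrier_mat n n" "hadj A = A" and x: "x \<in> carrier_vec n"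
  shows "qform x A = complex_of_real (Re (qform x A))"
proof -
  have "cnj (qform x A) = qform x A"
    unfolding qform_def using cnj_cscalar_prod[OF x, of "A *\<^sub>v x"] A x
    by (simp add: hermitian_cscalar_prod_swap[OF A x x])
  thus ?thesis by (metis Reals_cnj_iff Re_complex_of_real of_real_Re)
qed

lemma qform_diff_hermitian:
  assumes A: "A \<in> carrier_mat n n" "hadj A = A" and x: "x \<in> carrier_vec n" and y: "y \<in> carrier_vec n"
  shows "Re (qform (x - y) A) = Re (qform x A) - 2 * Re (cconj_vec x \<bullet> (A *\<^sub>v y)) + Re (qform y A)"
proof -
  have "qform (x - y) A
      = qform x A - cconj_vec x \<bullet> (A *\<^sub>v y) - cconj_vec y \<bullet> (A *\<^sub>v x) + qform y A"
    unfolding qform_def cconj_vec_diff[OF x y] using A x y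
    by (simp add: mult_minus_distrib_mat_vec minus_scalar_prod_distrib[of _ n] scalar_prod_minus_distrib[of _ n])
  moreover have "cconj_vec y \<bullet> (A *\<^sub>v x) = cnj (cconj_vec x \<bullet> (A *\<^sub>v y))"
    using hermitian_cscalar_prod_swap[OF A y x] cnj_cscalar_prod[OF x, of "A *\<^sub>v y"] A y by simp
  ultimately show ?thesis by simp
qed

lemma qform_cconj_mat:
  assumes A: "A \<in> carrier_mat n n" and v: "v \<in> carrier_vec n"
  shows "qform v (cconj_mat A) = cnj (qform (cconj_vec v) A)"
  unfolding qform_def using cconj_mult_mat_vec[of A n n "cconj_vec v"] cnj_scalar_prod[OF v, of "A *\<^sub>v cconj_vec v"] A v
  by simp

lemma minv_inverse:
  assumes A: "A \<in> carrier_mat n n" and d: "det A \<noteq> 0"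
  shows "minv A \<in> carrier_mat n n" and "A * minv A = 1\<^sub>m n" and "minv A * A = 1\<^sub>m n"
proof -
  have "A \<in> Units (ring_mat TYPE(complex) n n)" by (rule det_non_zero_imp_unit[OF A d])
  then obtain B where B: "mat_inverse A = Some B"
    using mat_inverse(1)[OF A, of n] by (cases "mat_inverse A") auto
  have "minv A = B" unfolding minv_def B by simp
  thus "minv A \<in> carrier_mat n n" "A * minv A = 1\<^sub>m n" "minv A * A = 1\<^sub>m n"
    using mat_inverse(2)[OF A B] by auto
qed

lemma mult_minv_mult_vec:
  assumes A: "A \<in> carrier_mat n n" and d: "det A \<noteq> 0" and x: "x \<in> carrier_vec n"
  shows "A *\<^sub>v (minv A *\<^sub>v x) = x"
  using minv_inverse[OF A d] A x by (simp flip: assoc_mult_mat_vec[of A n n "minv A" n x])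

lemma minv_eqI:
  assumes A: "A \<in> carrier_mat n n" and B: "B \<in> carrier_mat n n" and AB: "A * B = 1\<^sub>m n"
  shows "minv A = B"
proof -
  have "det A * det B = 1" using det_mult[OF A B] AB by simp
  hence "det A \<noteq> 0" by auto
  note inv = minv_inverse[OF A this]
  have "minv A = minv A * (A * B)" using inv(1) AB by simp
  also have "\<dots> = (minv A * A) * B" using inv(1) A B by (simp add: assoc_mult_mat)
  also have "\<dots> = B" using inv(3) B by simp
  finally show ?thesis .
qed

lemma qform_nonneg: "hermitian_pd n V \<Longrightarrow> x \<in> carrier_vec n \<Longrightarrow> 0 \<le> Re (qform x V)"
  unfolding hermitian_pd_def by (cases "x = 0\<^sub>v n") (auto simp: qform_def intro: less_imp_le)

lemma hermitian_pd_det_nonzero: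
  assumes "hermitian_pd n V"
  shows "det V \<noteq> 0"
proof
  assume "det V = 0"
  moreover have V: "V \<in> carrier_mat n n" using assms unfolding hermitian_pd_def by simp
  ultimately obtain v where v: "v \<in> carrier_vec n" "v \<noteq> 0\<^sub>v n" "V *\<^sub>v v = 0\<^sub>v n"
    using det_0_iff_vec_prod_zero by blast
  have "qform v V = 0" unfolding qform_def v(3) using v(1) by simp
  thus False using assms v(1,2) unfolding hermitian_pd_def by force
qed

lemma hermitian_pd_minv:
  assumes pd: "hermitian_pd n V"
  shows "hermitian_pd n (minv V)"
proof -
  have V: "V \<in> carrier_mat n n" "hadj V = V"
    and pos: "\<And>x. x \<in> carrier_vec n \<Longrightarrow> x \<noteq> 0\<^sub>v n \<Longrightarrow> Re (qform x V) > 0"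
    using pd unfolding hermitian_pd_def by auto
  note inv = minv_inverse[OF V(1) hermitian_pd_det_nonzero[OF pd]]
  have HV: "hadj (minv V) * V = 1\<^sub>m n"
    using hadj_mult[OF V(1) inv(1)] inv(2) V(2) hadj_one by simp
  have carrier: "hadj (minv V) \<in> carrier_mat n n" by (rule hadj_carrier[OF inv(1)])
  have "hadj (minv V) = hadj (minv V) * (V * minv V)" using inv(2) carrier by simp
  also have "\<dots> = (hadj (minv V) * V) * minv V" using carrier V(1) inv(1) by (simp add: assoc_mult_mat)
  also have "\<dots> = minv V" using HV inv(1) by simp
  finally have herm: "hadj (minv V) = minv V" .
  have "Re (qform z (minv V)) > 0" if z: "z \<in> carrier_vec n" "z \<noteq> 0\<^sub>v n" for z
  proof -
    define y where "y = minv V *\<^sub>v z"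
    have y: "y \<in> carrier_vec n" unfolding y_def using inv(1) z by simp
    have Vy: "V *\<^sub>v y = z"
      unfolding y_def by (rule mult_minv_mult_vec[OF V(1) hermitian_pd_det_nonzero[OF pd] z(1)])
    have "y \<noteq> 0\<^sub>v n" using Vy z V(1) by auto
    moreover have "qform z (minv V) = qform y V"
      unfolding qform_def y_def[symmetric] using hermitian_cscalar_prod_swap[OF V y y] Vy by simp
    ultimately show ?thesis using pos[OF y] by simp
  qed
  thus ?thesis using inv(1) herm unfolding hermitian_pd_def by blast
qed

lemma hermitian_pd_cconj_mat:
  assumes pd: "hermitian_pd n V"
  shows "hermitian_pd n (cconj_mat V)"
proof -
  have V: "V \<in> carrier_mat n n" "hadj V = V" using pd unfolding hermitian_pd_def by auto
  have "cconj_mat (cconj_mat V) = V" by (rule eq_matI) (auto simp: cconj_mat_def)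
  hence "hadj (cconj_mat V) = cconj_mat V"
    unfolding hadj_def using hermitian_cconj_mat[OF V] by simp
  moreover have "Re (qform x (cconj_mat V)) > 0" if x: "x \<in> carrier_vec n" "x \<noteq> 0\<^sub>v n" for x
  proof -
    have "cconj_vec x \<noteq> 0\<^sub>v n" using x(2) by (metis cconj_vec_cconj_vec cconj_vec_zero)
    thus ?thesis using pd x(1) unfolding qform_cconj_mat[OF V(1) x(1)] hermitian_pd_def by simp
  qed
  ultimately show ?thesis using cconj_mat_carrier[OF V(1)] unfolding hermitian_pd_def by blast
qed

section \<open>Bordered identity matrices\<close>

lemma det_identity_replace_row:
  fixes r :: "nat \<Rightarrow> 'a :: comm_ring_1"
  assumes k: "k < n"
  shows "det (mat n n (\<lambda>(i, j). if i = k then r j else if i = j then 1 else 0)) = r k"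
proof -
  define L where "L = mat n n (\<lambda>(i, j). if i = k then (if j < k then r j else if j = k then 1 else 0)
                                      else if i = j then 1 else (0::'a))"
  define U where "U = mat n n (\<lambda>(i, j). if i = k then (if k \<le> j then r j else 0)
                                      else if i = j then 1 else (0::'a))"
  have L: "L \<in> carrier_mat n n" and U: "U \<in> carrier_mat n n" unfolding L_def U_def by auto
  have LU: "mat n n (\<lambda>(i, j). if i = k then r j else if i = j then 1 else 0) = L * U"
  proof (rule eq_matI)
    fix i j assume "i < dim_row (L * U)" "j < dim_col (L * U)"
    hence i: "i < n" and j: "j < n" using L U by auto
    have "(L * U) $$ (i, j) = (\<Sum>l\<in>{0..<n}. L $$ (i, l) * U $$ (l, j))"
      using i j L U by (simp add: scalar_prod_def)
    also have "\<dots> = (\<Sum>l\<in>{0..<n}.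
        (if l = j then (if i = k then (if j < k then r j else 0) else if i = j then 1 else 0) else 0)
      + (if l = k then (if i = k then (if k \<le> j then r j else 0) else 0) else 0))"
      by (rule sum.cong) (auto simp: L_def U_def i j)
    also have "\<dots> = (if i = k then r j else if i = j then 1 else 0)"
      by (simp add: sum.distrib i j k)
    finally show "mat n n (\<lambda>(i, j). if i = k then r j else if i = j then 1 else 0) $$ (i, j)
        = (L * U) $$ (i, j)" using i j by simp
  qed (use L U in auto)
  have "det L = 1"
    by (subst det_lower_triangular[OF _ L]) (auto simp: L_def prod_list_diag_prod intro!: prod.neutral)
  moreover have "det U = (\<Prod>i\<in>{0..<n}. U $$ (i, i))"
    by (subst det_upper_triangular[OF _ U]) (auto simp: U_def upper_triangular_def prod_list_diag_prod)
  moreover have "\<dots> = (\<Prod>i\<in>{0..<n}. if i = k then r k else 1)"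
    by (rule prod.cong) (auto simp: U_def)
  ultimately show ?thesis unfolding LU det_mult[OF L U] using k by simp
qed

lemma bordered_identity_column_elimination:
  fixes r c :: "nat \<Rightarrow> 'a :: comm_ring_1"
  assumes k: "k < n"
  shows "mat n n (\<lambda>(i, j). if i = k then r j else if j = k then c i else if i = j then 1 else 0)
       * mat n n (\<lambda>(i, j). if j = k then (if i = k then 1 else - c i) else if i = j then 1 else 0)
       = mat n n (\<lambda>(i, j). if i = k then (if j = k then r k - (\<Sum>l\<in>{0..<n} - {k}. r l * c l) else r j)
                           else if i = j then 1 else 0)"
    (is "?T * ?L = ?R")
proof (rule eq_matI)
  fix i j assume "i < dim_row ?R" "j < dim_col ?R"
  hence i: "i < n" and j: "j < n" by auto
  have prod: "(?T * ?L) $$ (i, j) = (\<Sum>l\<in>{0..<n}. ?T $$ (i, l) * ?L $$ (l, j))"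
    using i j by (simp add: scalar_prod_def)
  show "(?T * ?L) $$ (i, j) = ?R $$ (i, j)"
  proof (cases "j = k")
    case False
    have "(\<Sum>l\<in>{0..<n}. ?T $$ (i, l) * ?L $$ (l, j)) = (\<Sum>l\<in>{0..<n}. if l = j then ?T $$ (i, j) else 0)"
      by (rule sum.cong) (auto simp: False j)
    thus ?thesis unfolding prod using i j False by simp
  next
    case True
    have "(\<Sum>l\<in>{0..<n}. ?T $$ (i, l) * ?L $$ (l, j))
        = ?T $$ (i, k) + (\<Sum>l\<in>{0..<n} - {k}. ?T $$ (i, l) * - c l)"
      using k True by (subst sum.remove[of _ k]) (auto intro!: sum.cong)
    also have "(\<Sum>l\<in>{0..<n} - {k}. ?T $$ (i, l) * - c l)
        = (if i = k then - (\<Sum>l\<in>{0..<n} - {k}. r l * c l) else - c i)"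
    proof (cases "i = k")
      case False
      have "(\<Sum>l\<in>{0..<n} - {k}. ?T $$ (i, l) * - c l) = (\<Sum>l\<in>{0..<n} - {k}. if l = i then - c i else 0)"
        by (rule sum.cong) (auto simp: False i)
      thus ?thesis using i False by simp
    next
      case True
      have "(\<Sum>l\<in>{0..<n} - {k}. ?T $$ (i, l) * - c l) = (\<Sum>l\<in>{0..<n} - {k}. - (r l * c l))"
        by (rule sum.cong) (use i in \<open>auto simp: True\<close>)
      thus ?thesis using True by (simp add: sum_negf)
    qed
    finally show ?thesis unfolding prod using i True k by simp
  qed
qed auto

lemma det_bordered_identity:
  fixes r c :: "nat \<Rightarrow> 'a :: comm_ring_1"
  assumes k: "k < n"
  shows "det (mat n n (\<lambda>(i, j). if i = k then r j else if j = k then c i else if i = j then 1 else 0))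
       = r k - (\<Sum>i\<in>{0..<n} - {k}. r i * c i)"
proof -
  define d where "d = r k - (\<Sum>i\<in>{0..<n} - {k}. r i * c i)"
  define T L R where "T = mat n n (\<lambda>(i, j). if i = k then r j else if j = k then c i else if i = j then 1 else (0::'a))"
    and "L = mat n n (\<lambda>(i, j). if j = k then (if i = k then 1 else - c i) else if i = j then 1 else (0::'a))"
    and "R = mat n n (\<lambda>(i, j). if i = k then (if j = k then d else r j) else if i = j then 1 else (0::'a))"
  have LT: "transpose_mat L = mat n n (\<lambda>(i, j). if i = k then (if j = k then 1 else - c j) else if i = j then 1 else 0)"
    by (rule eq_matI) (auto simp: L_def)
  have "T * L = R" unfolding T_def L_def R_def d_def by (rule bordered_identity_column_elimination[OF k])
  moreover have "det (T * L) = det T * det L" by (rule det_mult) (auto simp: T_def L_def)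
  moreover have "det L = 1"
    using LT det_identity_replace_row[OF k, of "\<lambda>j. if j = k then 1 else - c j"] det_transpose[of L n]
    by (simp add: L_def)
  moreover have "det R = d"
    using det_identity_replace_row[OF k, of "\<lambda>j. if j = k then d else r j"] by (simp add: R_def)
  ultimately show ?thesis unfolding T_def d_def by simp
qed

section \<open>The logarithmic barrier\<close>

definition barrier :: "complex mat \<Rightarrow> complex vec \<Rightarrow> complex vec \<Rightarrow> real" where
  "barrier V Q u = Re (qform u V) - 2 * ln (cmod (cconj_vec Q \<bullet> u))"

definition barrier_argmin :: "complex mat \<Rightarrow> complex vec \<Rightarrow> real \<Rightarrow> complex vec" where
  "barrier_argmin V Q \<theta> =
     (exp (\<i> * complex_of_real \<theta>) / complex_of_real (sqrt (Re (qform Q (minv V)))))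
     \<cdot>\<^sub>v (minv V *\<^sub>v Q)"

lemma ln_eq_minus_one_iff:
  assumes "0 < (x::real)"
  shows "ln x = x - 1 \<longleftrightarrow> x = 1"
proof
  assume e: "ln x = x - 1"
  have "ln x = 2 * ln (sqrt x)" using assms by (simp add: ln_sqrt)
  also have "\<dots> \<le> 2 * (sqrt x - 1)" using ln_le_minus_one[of "sqrt x"] assms by simp
  finally have "(sqrt x - 1)\<^sup>2 \<le> 0" using e assms by (simp add: power2_eq_square algebra_simps)
  hence "sqrt x = 1" by simp
  thus "x = 1" by simp
qed simp

lemma log_barrier_real:
  fixes S m a :: real
  assumes S: "0 < S" and m: "0 < m" and a: "m\<^sup>2 / S \<le> a"
  shows "1 - ln S \<le> a - 2 * ln m"
    and "a - 2 * ln m = 1 - ln S \<Longrightarrow> a = m\<^sup>2 / S \<and> m\<^sup>2 = S"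
proof -
  define x where "x = m\<^sup>2 / S"
  have x: "0 < x" unfolding x_def using S m by simp
  have "ln x = 2 * ln m - ln S" unfolding x_def using S m by (simp add: ln_div ln_realpow)
  hence split: "a - 2 * ln m - (1 - ln S) = (a - x) + (x - 1 - ln x)" by simp
  have "ln x \<le> x - 1" by (rule ln_le_minus_one[OF x])
  with split a show "1 - ln S \<le> a - 2 * ln m" unfolding x_def by simp
  assume "a - 2 * ln m = 1 - ln S"
  with split a \<open>ln x \<le> x - 1\<close> have "a = x" "ln x = x - 1" unfolding x_def by simp_all
  thus "a = m\<^sup>2 / S \<and> m\<^sup>2 = S" using ln_eq_minus_one_iff[OF x] S unfolding x_def by simp
qed

lemma polar_decomposition_Icc:
  assumes "c \<noteq> 0"
  shows "\<exists>\<theta> \<in> {0..2*pi}. c = complex_of_real (cmod c) * exp (\<i> * complex_of_real \<theta>)"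
proof -
  define \<theta> where "\<theta> = (if 0 \<le> Arg c then Arg c else Arg c + 2 * pi)"
  have "\<theta> \<in> {0..2*pi}" unfolding \<theta>_def using Arg_bounded[of c] by auto
  moreover have "cis \<theta> = cis (Arg c)" unfolding \<theta>_def by (simp add: complex_eq_iff)
  moreover have "c = complex_of_real (cmod c) * cis (Arg c)"
    using cis_Arg[OF assms] assms by (simp add: complex_sgn_def scaleR_conv_of_real field_simps)
  ultimately show ?thesis by (auto simp: cis_conv_exp intro!: bexI[of _ \<theta>])
qed

context
  fixes n :: nat and V :: "complex mat" and Q :: "complex vec"
  assumes pd: "hermitian_pd n V" and Q: "Q \<in> carrier_vec n" and Q0: "Q \<noteq> 0\<^sub>v n"
begin

private lemma V_props: "V \<in> carrier_mat n n" "hadj V = V" "det V \<noteq> 0"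
  using pd hermitian_pd_det_nonzero[OF pd] unfolding hermitian_pd_def by auto

private lemma minv_Q: "minv V *\<^sub>v Q \<in> carrier_vec n" "V *\<^sub>v (minv V *\<^sub>v Q) = Q"
  using minv_inverse(1)[OF V_props(1,3)] mult_minv_mult_vec[OF V_props(1,3) Q] Q by auto

lemma qform_minv_pos: "0 < Re (qform Q (minv V))"
  using hermitian_pd_minv[OF pd] Q Q0 unfolding hermitian_pd_def by blast

private lemma qform_minv:
  "cconj_vec (minv V *\<^sub>v Q) \<bullet> Q = qform Q (minv V)"
  "qform Q (minv V) = complex_of_real (Re (qform Q (minv V)))"
proof -
  show "cconj_vec (minv V *\<^sub>v Q) \<bullet> Q = qform Q (minv V)"
    unfolding qform_def using hermitian_cscalar_prod_swap[OF V_props(1,2) minv_Q(1) minv_Q(1)] minv_Q(2) by simp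
  show "qform Q (minv V) = complex_of_real (Re (qform Q (minv V)))"
    using qform_hermitian_real[of "minv V" n Q] hermitian_pd_minv[OF pd] Q
    unfolding hermitian_pd_def by simp
qed

text \<open>\<open>(c / S) V\<^sup>-\<^sup>1Q\<close> is the \<open>V\<close>-orthogonal projection of \<open>u\<close> onto \<open>V\<^sup>-\<^sup>1Q\<close>; the residual
  identity below is Cauchy-Schwarz for the inner product \<open>x\<^sup>H V y\<close>.\<close>

lemma barrier_residual:
  assumes u: "u \<in> carrier_vec n"
  defines "S \<equiv> Re (qform Q (minv V))" and "c \<equiv> cconj_vec Q \<bullet> u"
  shows "Re (qform (u - (c / complex_of_real S) \<cdot>\<^sub>v (minv V *\<^sub>v Q)) V)
           = Re (qform u V) - (cmod c)\<^sup>2 / S"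
proof -
  define y where "y = minv V *\<^sub>v Q"
  define a where "a = c / complex_of_real S"
  have y: "y \<in> carrier_vec n" "V *\<^sub>v y = Q" using minv_Q unfolding y_def by auto
  have S: "0 < S" unfolding S_def by (rule qform_minv_pos)
  have cross: "cconj_vec u \<bullet> (V *\<^sub>v (a \<cdot>\<^sub>v y)) = a * cnj c"
    using y u Q V_props(1) cnj_cscalar_prod[OF Q u] by (simp add: mult_mat_vec c_def)
  have sq: "qform (a \<cdot>\<^sub>v y) V = cnj a * a * complex_of_real S"
    using y V_props(1) Q qform_minv unfolding qform_def y_def S_def
    by (simp add: cconj_vec_smult mult_mat_vec smult_scalar_prod_distrib[of _ n] scalar_prod_smult_distrib[of _ n])
  have cc: "c * cnj c = complex_of_real ((cmod c)\<^sup>2)" by (rule complex_norm_square[symmetric])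
  have "a * cnj c = complex_of_real ((cmod c)\<^sup>2 / S)"
    unfolding a_def using cc by simp
  moreover have "cnj a * a * complex_of_real S = c * cnj c / complex_of_real S"
    unfolding a_def using S by (simp add: field_simps)
  ultimately have re: "Re (a * cnj c) = (cmod c)\<^sup>2 / S" "Re (cnj a * a * complex_of_real S) = (cmod c)\<^sup>2 / S"
    unfolding cc by simp_all
  have "Re (qform (u - a \<cdot>\<^sub>v y) V)
      = Re (qform u V) - 2 * Re (cconj_vec u \<bullet> (V *\<^sub>v (a \<cdot>\<^sub>v y))) + Re (qform (a \<cdot>\<^sub>v y) V)"
    using y(1) by (intro qform_diff_hermitian[OF V_props(1,2) u]) simp
  also have "\<dots> = Re (qform u V) - (cmod c)\<^sup>2 / S"
    unfolding cross sq re by simp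
  finally show ?thesis unfolding a_def y_def .
qed

lemma barrier_ge:
  assumes u: "u \<in> carrier_vec n" and c: "cconj_vec Q \<bullet> u \<noteq> 0"
  shows "1 - ln (Re (qform Q (minv V))) \<le> barrier V Q u"
proof -
  have "0 \<le> Re (qform (u - (cconj_vec Q \<bullet> u / complex_of_real (Re (qform Q (minv V)))) \<cdot>\<^sub>v (minv V *\<^sub>v Q)) V)"
    using qform_nonneg[OF pd] u minv_Q(1) by simp
  hence "(cmod (cconj_vec Q \<bullet> u))\<^sup>2 / Re (qform Q (minv V)) \<le> Re (qform u V)"
    unfolding barrier_residual[OF u] by simp
  thus ?thesis
    unfolding barrier_def using log_barrier_real(1)[OF qform_minv_pos] c by simp
qed

lemma barrier_at_argmin:
  shows "barrier_argmin V Q \<theta> \<in> carrier_vec n"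
    and "cconj_vec Q \<bullet> barrier_argmin V Q \<theta> \<noteq> 0"
    and "barrier V Q (barrier_argmin V Q \<theta>) = 1 - ln (Re (qform Q (minv V)))"
proof -
  define S where "S = Re (qform Q (minv V))"
  define b where "b = exp (\<i> * complex_of_real \<theta>) / complex_of_real (sqrt S)"
  define y where "y = minv V *\<^sub>v Q"
  have y: "y \<in> carrier_vec n" "V *\<^sub>v y = Q" using minv_Q unfolding y_def by auto
  have S: "0 < S" unfolding S_def by (rule qform_minv_pos)
  have b: "cmod b = 1 / sqrt S" unfolding b_def using S by (simp add: norm_divide)
  have u: "barrier_argmin V Q \<theta> = b \<cdot>\<^sub>v y"
    unfolding barrier_argmin_def b_def S_def y_def ..
  show "barrier_argmin V Q \<theta> \<in> carrier_vec n" unfolding u using y by simp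
  have "cconj_vec Q \<bullet> (b \<cdot>\<^sub>v y) = b * qform Q (minv V)"
    using Q y unfolding qform_def y_def by simp
  hence c: "cconj_vec Q \<bullet> barrier_argmin V Q \<theta> = b * complex_of_real S"
    unfolding u S_def using qform_minv(2) by simp
  show "cconj_vec Q \<bullet> barrier_argmin V Q \<theta> \<noteq> 0" unfolding c using S by (simp add: b_def)
  have "qform (b \<cdot>\<^sub>v y) V = cnj b * b * (cconj_vec y \<bullet> Q)"
    unfolding qform_def cconj_vec_smult using y Q V_props(1)
    by (simp add: mult_mat_vec smult_scalar_prod_distrib[of _ n] scalar_prod_smult_distrib[of _ n])
  hence "qform (b \<cdot>\<^sub>v y) V = cnj b * b * qform Q (minv V)"
    unfolding y_def qform_minv(1) .
  hence "qform (barrier_argmin V Q \<theta>) V = complex_of_real ((cmod b)\<^sup>2 * S)"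
    unfolding u S_def using qform_minv(2) complex_norm_square[of b] by (simp add: mult.commute)
  hence "Re (qform (barrier_argmin V Q \<theta>) V) = 1"
    using S unfolding b by (simp add: power_divide)
  moreover have "cmod (cconj_vec Q \<bullet> barrier_argmin V Q \<theta>) = sqrt S"
    unfolding c norm_mult b using S by (simp add: real_div_sqrt)
  moreover have "2 * ln (sqrt S) = ln S" using S by (simp add: ln_sqrt)
  ultimately show "barrier V Q (barrier_argmin V Q \<theta>) = 1 - ln (Re (qform Q (minv V)))"
    unfolding barrier_def S_def by simp
qed

lemma barrier_eq_min_imp_argmin:
  assumes u: "u \<in> carrier_vec n" and c0: "cconj_vec Q \<bullet> u \<noteq> 0"
    and eq: "barrier V Q u = 1 - ln (Re (qform Q (minv V)))"
  shows "\<exists>\<theta> \<in> {0..2*pi}. u = barrier_argmin V Q \<theta>"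
proof -
  define S where "S = Re (qform Q (minv V))"
  define c where "c = cconj_vec Q \<bullet> u"
  define w where "w = (c / complex_of_real S) \<cdot>\<^sub>v (minv V *\<^sub>v Q)"
  have S: "0 < S" unfolding S_def by (rule qform_minv_pos)
  have w: "w \<in> carrier_vec n" unfolding w_def using minv_Q(1) by simp
  have res: "Re (qform (u - w) V) = Re (qform u V) - (cmod c)\<^sup>2 / S"
    unfolding w_def c_def S_def by (rule barrier_residual[OF u])
  hence "(cmod c)\<^sup>2 / S \<le> Re (qform u V)" using qform_nonneg[OF pd, of "u - w"] u w by simp
  with eq c0 have "Re (qform u V) = (cmod c)\<^sup>2 / S" and cS: "(cmod c)\<^sup>2 = S"
    using log_barrier_real(2)[OF S] unfolding barrier_def c_def S_def by auto
  hence "Re (qform (u - w) V) = 0" unfolding res by simp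
  hence diff0: "u - w = 0\<^sub>v n" using pd u w unfolding hermitian_pd_def by fastforce
  have ueq: "u = w"
  proof (rule eq_vecI)
    fix i assume "i < dim_vec w"
    hence "i < n" using w by simp
    thus "u $ i = w $ i" using arg_cong[OF diff0, of "\<lambda>v. v $ i"] u w by simp
  qed (use u w in simp)
  have "c \<noteq> 0" using c0 unfolding c_def .
  then obtain \<theta> where \<theta>: "\<theta> \<in> {0..2*pi}"
    and "c = complex_of_real (cmod c) * exp (\<i> * complex_of_real \<theta>)"
    by (metis polar_decomposition_Icc)
  moreover have "cmod c = sqrt S" using cS by (metis norm_ge_zero real_sqrt_unique)
  moreover have "complex_of_real S = complex_of_real (sqrt S) * complex_of_real (sqrt S)"
    using S by (simp flip: of_real_mult)
  ultimately have "c / complex_of_real S = exp (\<i> * complex_of_real \<theta>) / complex_of_real (sqrt S)"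
    using S by simp
  thus ?thesis using ueq \<theta> unfolding w_def barrier_argmin_def S_def by auto
qed

end

section \<open>Index bookkeeping and the determinant of \<open>T\<^sub>k\<close>\<close>

definition idx_inv :: "nat \<Rightarrow> nat \<Rightarrow> nat" where
  "idx_inv k i = (if i < k then i else i - 1)"

lemma idx_less: "k < M \<Longrightarrow> j < M - 1 \<Longrightarrow> idx k j < M"
  by (auto simp: idx_def)

lemma idx_neq: "idx k j \<noteq> k"
  by (auto simp: idx_def)

lemma idx_inv_idx [simp]: "idx_inv k (idx k j) = j"
  by (auto simp: idx_def idx_inv_def)

lemma idx_inv_less: "k < M \<Longrightarrow> i < M \<Longrightarrow> i \<noteq> k \<Longrightarrow> idx_inv k i < M - 1"
  by (auto simp: idx_inv_def)

lemma idx_idx_inv: "i \<noteq> k \<Longrightarrow> idx k (idx_inv k i) = i"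
  by (auto simp: idx_def idx_inv_def)

lemma idx_eq_iff: "i \<noteq> k \<Longrightarrow> i = idx k j \<longleftrightarrow> j = idx_inv k i"
  by (auto simp: idx_def idx_inv_def)

lemma qent_eq: "qent k q m = q $ idx_inv k m"
  by (simp add: qent_def idx_inv_def)

lemma sum_reindex_idx:
  assumes k: "k < M"
  shows "(\<Sum>m\<in>{0..<M} - {k}. f m) = (\<Sum>j\<in>{0..<M - 1}. f (idx k j))"
proof -
  have img: "idx k ` {0..<M - 1} = {0..<M} - {k}"
  proof (intro equalityI subsetI)
    fix i assume "i \<in> idx k ` {0..<M - 1}"
    thus "i \<in> {0..<M} - {k}" using idx_less[OF k] idx_neq by auto
  next
    fix i assume "i \<in> {0..<M} - {k}"
    hence "i = idx k (idx_inv k i)" "idx_inv k i \<in> {0..<M - 1}"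
      using idx_idx_inv idx_inv_less[OF k] by auto
    thus "i \<in> idx k ` {0..<M - 1}" by (rule image_eqI)
  qed
  have "inj_on (idx k) {0..<M - 1}"
    by (auto simp: inj_on_def idx_def split: if_splits)
  thus ?thesis unfolding img[symmetric] by (simp add: sum.reindex)
qed

lemma Ebar_carrier: "Ebar M k \<in> carrier_mat M (M - 1)"
  by (simp add: Ebar_def)

lemma cconj_Ebar: "cconj_mat (Ebar M k) = Ebar M k"
  by (rule eq_matI) (auto simp: cconj_mat_def Ebar_def)

lemma Ebar_mult_vec:
  assumes k: "k < M" and x: "x \<in> carrier_vec (M - 1)"
  shows "Ebar M k *\<^sub>v x = vec M (\<lambda>i. if i = k then 0 else x $ idx_inv k i)"
proof (rule eq_vecI)
  fix i assume "i < dim_vec (vec M (\<lambda>i. if i = k then 0 else x $ idx_inv k i))"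
  hence i: "i < M" by simp
  have "(Ebar M k *\<^sub>v x) $ i = (\<Sum>j\<in>{0..<M - 1}. (if i = idx k j then 1 else 0) * x $ j)"
    using i x by (simp add: Ebar_def scalar_prod_def)
  also have "\<dots> = (if i = k then 0 else x $ idx_inv k i)"
  proof (cases "i = k")
    case True
    thus ?thesis by (simp add: idx_neq[symmetric])
  next
    case False
    have "(\<Sum>j\<in>{0..<M - 1}. (if i = idx k j then 1 else 0) * x $ j)
        = (\<Sum>j\<in>{0..<M - 1}. if j = idx_inv k i then x $ j else 0)"
      by (rule sum.cong) (auto simp: idx_eq_iff[OF False])
    thus ?thesis using idx_inv_less[OF k i False] False by simp
  qed
  finally show "(Ebar M k *\<^sub>v x) $ i = vec M (\<lambda>i. if i = k then 0 else x $ idx_inv k i) $ i"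
    using i by simp
qed (simp add: Ebar_def)

lemma Ebar_mult_vec_nonzero:
  assumes k: "k < M" and x: "x \<in> carrier_vec (M - 1)" and x0: "x \<noteq> 0\<^sub>v (M - 1)"
  shows "Ebar M k *\<^sub>v x \<noteq> 0\<^sub>v M"
proof
  assume E0: "Ebar M k *\<^sub>v x = 0\<^sub>v M"
  have "x = 0\<^sub>v (M - 1)"
  proof (rule eq_vecI)
    fix j assume "j < dim_vec (0\<^sub>v (M - 1) :: complex vec)"
    hence j: "j < M - 1" by simp
    have "(Ebar M k *\<^sub>v x) $ idx k j = x $ j"
      unfolding Ebar_mult_vec[OF k x] using idx_less[OF k j] idx_neq by simp
    thus "x $ j = 0\<^sub>v (M - 1) $ j" using E0 idx_less[OF k j] j by simp
  qed (use x in simp)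
  thus False using x0 by simp
qed

lemma cscalar_prod_transpose_Ebar:
  assumes x: "x \<in> carrier_vec (M - 1)" and v: "v \<in> carrier_vec M"
  shows "cconj_vec x \<bullet> (transpose_mat (Ebar M k) *\<^sub>v v) = cconj_vec (Ebar M k *\<^sub>v x) \<bullet> v"
proof -
  note E = Ebar_carrier[of M k]
  have "cconj_vec (Ebar M k *\<^sub>v x) = Ebar M k *\<^sub>v cconj_vec x"
    using cconj_mult_mat_vec[OF E x] cconj_Ebar by simp
  thus ?thesis
    using transpose_vec_mult_scalar[OF E, of "cconj_vec x" v] E x v
    by (simp add: comm_scalar_prod[of _ M] comm_scalar_prod[of _ "M - 1"])
qed

lemma colm_dims [simp]: "dim_row (colm x) = dim_vec x" "dim_col (colm x) = 1"
  by (auto simp: colm_def)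

lemma colm_index: "i < dim_vec x \<Longrightarrow> colm x $$ (i, 0) = x $ i"
  by (auto simp: colm_def)

lemma col_colm: "x \<in> carrier_vec n \<Longrightarrow> col (colm x) 0 = x"
  by (rule eq_vecI) (auto simp: colm_def col_def)

lemma Tk_explicit:
  assumes k: "k < M" and u: "u \<in> carrier_vec M" and q: "q \<in> carrier_vec (M - 1)"
  shows "Tk M k u q = mat M M (\<lambda>(i, j). if i = k then cnj (u $ j)
            else if j = k then cnj (q $ idx_inv k i) else if i = j then 1 else 0)"
proof -
  have cq: "cconj_vec q \<in> carrier_vec (M - 1)" using q by simp
  have col: "Ebar M k * colm (cconj_vec q) = colm (Ebar M k *\<^sub>v cconj_vec q)"
    by (rule eq_matI) (use cq in \<open>auto simp: col_colm[OF cq] colm_index Ebar_def\<close>)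
  show ?thesis unfolding Tk_def col Ebar_mult_vec[OF k cq]
    by (rule eq_matI)
      (use u q k idx_inv_less[OF k] in \<open>auto simp: colm_def hadj_def cconj_mat_def scalar_prod_def\<close>)
qed

lemma qtil_explicit:
  assumes k: "k < M" and q: "q \<in> carrier_vec (M - 1)"
  shows "qtil M k q = vec M (\<lambda>i. if i = k then 1 else - cnj (q $ idx_inv k i))"
  unfolding qtil_def Ebar_mult_vec[OF k cconj_vec_carrier[THEN iffD2, OF q]]
  by (rule eq_vecI) (use k q idx_inv_less[OF k] in auto)

lemma qtil_carrier: "k < M \<Longrightarrow> q \<in> carrier_vec (M - 1) \<Longrightarrow> qtil M k q \<in> carrier_vec M"
  by (simp add: qtil_explicit)

lemma qtil_nonzero: "k < M \<Longrightarrow> q \<in> carrier_vec (M - 1) \<Longrightarrow> qtil M k q \<noteq> 0\<^sub>v M"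
  by (auto simp: qtil_explicit dest!: arg_cong[of _ _ "\<lambda>v. v $ k"])

lemma det_Tk:
  assumes k: "k < M" and u: "u \<in> carrier_vec M" and q: "q \<in> carrier_vec (M - 1)"
  shows "det (Tk M k u q) = cnj (cconj_vec (qtil M k q) \<bullet> u)"
proof -
  have "cconj_vec (qtil M k q) \<bullet> u = (\<Sum>i\<in>{0..<M}. (if i = k then 1 else - q $ idx_inv k i) * u $ i)"
    unfolding qtil_explicit[OF k q] scalar_prod_def using u by (auto intro!: sum.cong)
  also have "\<dots> = u $ k + (\<Sum>i\<in>{0..<M} - {k}. - (u $ i * q $ idx_inv k i))"
    using k by (subst sum.remove[of _ k]) (auto intro!: sum.cong)
  finally show ?thesis
    unfolding Tk_explicit[OF k u q] det_bordered_identity[OF k] by (simp add: cnj_sum sum_negf)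
qed

section \<open>Minimisation over \<open>u\<close>\<close>

definition ell2_q_part :: "nat \<Rightarrow> nat \<Rightarrow> (nat \<Rightarrow> complex mat) \<Rightarrow> complex vec \<Rightarrow> real" where
  "ell2_q_part M k V q = Re (\<Sum>m \<in> {0..<M} - {k}. qform (unit_vec M m + qent k q m \<cdot>\<^sub>v unit_vec M k) (V m))"

lemma ell2_eq_q_part_plus_barrier:
  assumes "k < M" and "u \<in> carrier_vec M" and "q \<in> carrier_vec (M - 1)"
  shows "ell2 M k V u q = ell2_q_part M k V q + barrier (V k) (qtil M k q) u"
  unfolding ell2_def ell2_q_part_def barrier_def det_Tk[OF assms] complex_mod_cnj by simp

definition ell2_partial_min :: "nat \<Rightarrow> nat \<Rightarrow> (nat \<Rightarrow> complex mat) \<Rightarrow> complex vec \<Rightarrow> real" where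
  "ell2_partial_min M k V q = ell2_q_part M k V q + (1 - ln (Re (qform (qtil M k q) (minv (V k)))))"

context
  fixes M k :: nat and V :: "nat \<Rightarrow> complex mat" and q :: "complex vec"
  assumes k: "k < M" and pd: "hermitian_pd M (V k)" and q: "q \<in> carrier_vec (M - 1)"
begin

private lemma det_Tk_nonzero_iff:
  "u \<in> carrier_vec M \<Longrightarrow> det (Tk M k u q) \<noteq> 0 \<longleftrightarrow> cconj_vec (qtil M k q) \<bullet> u \<noteq> 0"
  by (simp add: det_Tk[OF k _ q])

lemma ell2_partial_min_le:
  "u \<in> carrier_vec M \<Longrightarrow> det (Tk M k u q) \<noteq> 0 \<Longrightarrow> ell2_partial_min M k V q \<le> ell2 M k V u q"
  using barrier_ge[OF pd qtil_carrier[OF k q] qtil_nonzero[OF k q]]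
  by (simp add: ell2_eq_q_part_plus_barrier[OF k _ q] ell2_partial_min_def det_Tk_nonzero_iff)

lemma ell2_at_barrier_argmin:
  fixes \<theta> :: real
  defines "u \<equiv> barrier_argmin (V k) (qtil M k q) \<theta>"
  shows "u \<in> carrier_vec M" and "det (Tk M k u q) \<noteq> 0"
    and "ell2 M k V u q = ell2_partial_min M k V q"
  using barrier_at_argmin[OF pd qtil_carrier[OF k q] qtil_nonzero[OF k q], of \<theta>] unfolding u_def
  by (simp_all add: ell2_eq_q_part_plus_barrier[OF k _ q] ell2_partial_min_def det_Tk_nonzero_iff)

lemma ell2_minimizer_in_u_iff:
  assumes u: "u \<in> carrier_vec M"
  shows "(det (Tk M k u q) \<noteq> 0 \<and>
          (\<forall>u' \<in> carrier_vec M. det (Tk M k u' q) \<noteq> 0 \<longrightarrow> ell2 M k V u q \<le> ell2 M k V u' q))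
     \<longleftrightarrow> (\<exists>\<theta> \<in> {0..2*pi}. u = barrier_argmin (V k) (qtil M k q) \<theta>)"
proof
  assume min: "det (Tk M k u q) \<noteq> 0 \<and>
    (\<forall>u' \<in> carrier_vec M. det (Tk M k u' q) \<noteq> 0 \<longrightarrow> ell2 M k V u q \<le> ell2 M k V u' q)"
  hence "ell2 M k V u q \<le> ell2_partial_min M k V q"
    using ell2_at_barrier_argmin[of 0] by metis
  hence "ell2 M k V u q = ell2_partial_min M k V q"
    using ell2_partial_min_le[OF u] min by simp
  thus "\<exists>\<theta> \<in> {0..2*pi}. u = barrier_argmin (V k) (qtil M k q) \<theta>"
    using barrier_eq_min_imp_argmin[OF pd qtil_carrier[OF k q] qtil_nonzero[OF k q] u] min
    by (simp add: ell2_eq_q_part_plus_barrier[OF k u q] ell2_partial_min_def det_Tk_nonzero_iff[OF u])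
next
  assume "\<exists>\<theta> \<in> {0..2*pi}. u = barrier_argmin (V k) (qtil M k q) \<theta>"
  then obtain \<theta> where "u = barrier_argmin (V k) (qtil M k q) \<theta>" by blast
  thus "det (Tk M k u q) \<noteq> 0 \<and>
    (\<forall>u' \<in> carrier_vec M. det (Tk M k u' q) \<noteq> 0 \<longrightarrow> ell2 M k V u q \<le> ell2 M k V u' q)"
    using ell2_at_barrier_argmin ell2_partial_min_le by simp
qed

end

section \<open>The reduced objective in \<open>q\<close>\<close>

lemma mat_diag_mult_vec:
  assumes x: "x \<in> carrier_vec n"
  shows "mat_diag n f *\<^sub>v x = vec n (\<lambda>j. f j * x $ j)"
proof (rule eq_vecI)
  fix j assume "j < dim_vec (vec n (\<lambda>j. f j * x $ j))"
  hence j: "j < n" by simp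
  have "(mat_diag n f *\<^sub>v x) $ j = (\<Sum>l\<in>{0..<n}. (if j = l then f l else 0) * x $ l)"
    using j x by (simp add: mat_diag_def scalar_prod_def)
  also have "\<dots> = (\<Sum>l\<in>{0..<n}. if l = j then f j * x $ j else 0)" by (rule sum.cong) auto
  finally show "(mat_diag n f *\<^sub>v x) $ j = vec n (\<lambda>j. f j * x $ j) $ j" using j by simp
qed (simp add: mat_diag_def)

lemma qform_mat_diag:
  "z \<in> carrier_vec n \<Longrightarrow> qform z (mat_diag n a) = (\<Sum>j\<in>{0..<n}. cnj (z $ j) * a j * z $ j)"
  unfolding qform_def by (simp add: mat_diag_mult_vec scalar_prod_def mult.assoc)

lemma minv_mat_diag:
  assumes "\<And>j. j < n \<Longrightarrow> a j \<noteq> 0"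
  shows "minv (mat_diag n a) = mat_diag n (\<lambda>j. 1 / a j)"
proof (rule minv_eqI)
  show "mat_diag n a * mat_diag n (\<lambda>j. 1 / a j) = 1\<^sub>m n"
    unfolding mat_diag_diag by (rule eq_matI) (auto simp: mat_diag_def assms)
qed auto

lemma hermitian_pd_diag:
  assumes pd: "hermitian_pd n V" and i: "i < n"
  shows "0 < Re (V $$ (i, i))" and "cnj (V $$ (i, i)) = V $$ (i, i)"
proof -
  have V: "V \<in> carrier_mat n n" "hadj V = V" using pd unfolding hermitian_pd_def by auto
  have "unit_vec n i \<noteq> (0\<^sub>v n :: complex vec)"
    using i by (metis index_unit_vec(1) index_zero_vec(1) one_neq_zero)
  hence "0 < Re (qform (unit_vec n i) V)"
    using pd unit_vec_carrier[of n i] unfolding hermitian_pd_def by blast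
  thus "0 < Re (V $$ (i, i))" unfolding qform_def using V i by simp
  show "cnj (V $$ (i, i)) = V $$ (i, i)" using hermitian_entry[OF V i i] by simp
qed

lemma qform_unit_add_smult:
  assumes V: "V \<in> carrier_mat n n" and m: "m < n" and k: "k < n"
  shows "qform (unit_vec n m + t \<cdot>\<^sub>v unit_vec n k) V
    = V $$ (m, m) + t * V $$ (m, k) + cnj t * V $$ (k, m) + cnj t * t * V $$ (k, k)"
proof -
  define em where "em = (unit_vec n m :: complex vec)"
  define ek where "ek = (unit_vec n k :: complex vec)"
  have c: "em \<in> carrier_vec n" "ek \<in> carrier_vec n" "V *\<^sub>v em \<in> carrier_vec n" "V *\<^sub>v ek \<in> carrier_vec n"
    using V unfolding em_def ek_def by auto
  have "qform (em + t \<cdot>\<^sub>v ek) V = (em + cnj t \<cdot>\<^sub>v ek) \<bullet> (V *\<^sub>v em + t \<cdot>\<^sub>v (V *\<^sub>v ek))"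
    unfolding qform_def using c V
    by (simp add: cconj_vec_add[of _ n] cconj_vec_smult mult_add_distrib_mat_vec mult_mat_vec em_def ek_def)
  also have "\<dots> = em \<bullet> (V *\<^sub>v em) + t * (em \<bullet> (V *\<^sub>v ek))
      + cnj t * (ek \<bullet> (V *\<^sub>v em)) + cnj t * t * (ek \<bullet> (V *\<^sub>v ek))"
    using c by (simp add: add_scalar_prod_distrib[of _ n] scalar_prod_add_distrib[of _ n] algebra_simps)
  finally show ?thesis unfolding em_def ek_def using V m k by simp
qed

lemma ell2_q_part_as_sum:
  assumes k: "k < M" and pd: "\<And>m. m < M \<Longrightarrow> hermitian_pd M (V m)"
  shows "ell2_q_part M k V q = (\<Sum>j\<in>{0..<M - 1}. Re (V (idx k j) $$ (idx k j, idx k j)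
            + q $ j * cnj (V (idx k j) $$ (k, idx k j)) + cnj (q $ j) * V (idx k j) $$ (k, idx k j)
            + cnj (q $ j) * q $ j * V (idx k j) $$ (k, k)))"
  unfolding ell2_q_part_def sum_reindex_idx[OF k] Re_sum qent_eq idx_inv_idx
proof (rule sum.cong[OF refl])
  fix j assume "j \<in> {0..<M - 1}"
  hence j: "idx k j < M" using idx_less[OF k] by simp
  have V: "V (idx k j) \<in> carrier_mat M M" "hadj (V (idx k j)) = V (idx k j)"
    using pd[OF j] unfolding hermitian_pd_def by auto
  show "Re (qform (unit_vec M (idx k j) + q $ j \<cdot>\<^sub>v unit_vec M k) (V (idx k j))) = Re (V (idx k j) $$ (idx k j, idx k j)
            + q $ j * cnj (V (idx k j) $$ (k, idx k j)) + cnj (q $ j) * V (idx k j) $$ (k, idx k j)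
            + cnj (q $ j) * q $ j * V (idx k j) $$ (k, k))"
    unfolding qform_unit_add_smult[OF V(1) j k] hermitian_entry[OF V j k] ..
qed

lemma Re_complete_square:
  fixes x a b d :: complex
  assumes "a \<noteq> 0" and "cnj a = a"
  shows "Re (cnj (x + b / a) * a * (x + b / a))
       = Re (d + x * cnj b + cnj x * b + cnj x * x * a) + Re (b * cnj b / a - d)"
proof -
  have "cnj (x + b / a) * a * (x + b / a)
      = (d + x * cnj b + cnj x * b + cnj x * x * a) + (b * cnj b / a - d)"
    using assms by (simp add: field_simps)
  thus ?thesis by (simp only: plus_complex.sel(1))
qed

lemma qform_Amat_shift:
  assumes k: "k < M" and pd: "\<And>m. m < M \<Longrightarrow> hermitian_pd M (V m)" and q: "q \<in> carrier_vec (M - 1)"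
  shows "Re (qform (q + minv (Amat M k V) *\<^sub>v bvec M k V) (Amat M k V))
    = ell2_q_part M k V q + (\<Sum>j\<in>{0..<M - 1}. Re (V (idx k j) $$ (k, idx k j) * cnj (V (idx k j) $$ (k, idx k j)) / V (idx k j) $$ (k, k)
           - V (idx k j) $$ (idx k j, idx k j)))"
proof -
  define n where "n = M - 1"
  define a where "a j = V (idx k j) $$ (k, k)" for j
  define b where "b j = V (idx k j) $$ (k, idx k j)" for j
  define d where "d j = V (idx k j) $$ (idx k j, idx k j)" for j
  have a: "a j \<noteq> 0" "cnj (a j) = a j" if "j < n" for j
    using hermitian_pd_diag[OF pd[OF idx_less[OF k]] k] that
    unfolding a_def n_def by fastforce+
  have "minv (Amat M k V) = mat_diag n (\<lambda>j. 1 / a j)"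
    unfolding Amat_def a_def[symmetric] n_def[symmetric] by (rule minv_mat_diag) (use a in blast)
  hence shift: "q + minv (Amat M k V) *\<^sub>v bvec M k V = vec n (\<lambda>j. q $ j + b j / a j)"
    using q by (intro eq_vecI) (auto simp: mat_diag_mult_vec bvec_def b_def n_def)
  have "Re (qform (q + minv (Amat M k V) *\<^sub>v bvec M k V) (Amat M k V))
      = (\<Sum>j\<in>{0..<n}. Re (cnj (q $ j + b j / a j) * a j * (q $ j + b j / a j)))"
    unfolding shift unfolding Amat_def a_def[symmetric] n_def[symmetric]
    by (simp add: qform_mat_diag Re_sum)
  also have "\<dots> = (\<Sum>j\<in>{0..<n}. Re (d j + q $ j * cnj (b j) + cnj (q $ j) * b j + cnj (q $ j) * q $ j * a j)
      + Re (b j * cnj (b j) / a j - d j))"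
    using a by (intro sum.cong refl Re_complete_square) auto
  also have "\<dots> = ell2_q_part M k V q + (\<Sum>j\<in>{0..<n}. Re (b j * cnj (b j) / a j - d j))"
    by (simp only: sum.distrib ell2_q_part_as_sum[OF k pd] a_def b_def d_def n_def)
  finally show ?thesis unfolding a_def b_def d_def n_def .
qed

context
  fixes M k :: nat and V :: "nat \<Rightarrow> complex mat"
  assumes k: "k < M" and pd: "hermitian_pd M (V k)"
begin

private lemma pd_cconj_minv: "hermitian_pd M (cconj_mat (minv (V k)))"
  by (rule hermitian_pd_cconj_mat[OF hermitian_pd_minv[OF pd]])

private lemma P: "cconj_mat (minv (V k)) \<in> carrier_mat M M"
  "hadj (cconj_mat (minv (V k))) = cconj_mat (minv (V k))"
  using pd_cconj_minv unfolding hermitian_pd_def by auto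

lemma Cmat_carrier: "Cmat M k V \<in> carrier_mat (M - 1) (M - 1)"
  unfolding Cmat_def using P(1) Ebar_carrier[of M k] by auto

lemma Cmat_mult_vec:
  assumes x: "x \<in> carrier_vec (M - 1)"
  shows "Cmat M k V *\<^sub>v x = transpose_mat (Ebar M k) *\<^sub>v (cconj_mat (minv (V k)) *\<^sub>v (Ebar M k *\<^sub>v x))"
proof -
  note carriers = P(1) Ebar_carrier[of M k] x
  have "Cmat M k V *\<^sub>v x = (transpose_mat (Ebar M k) * cconj_mat (minv (V k))) *\<^sub>v (Ebar M k *\<^sub>v x)"
    unfolding Cmat_def by (rule assoc_mult_mat_vec) (use carriers in auto)
  also have "\<dots> = transpose_mat (Ebar M k) *\<^sub>v (cconj_mat (minv (V k)) *\<^sub>v (Ebar M k *\<^sub>v x))"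
    by (rule assoc_mult_mat_vec) (use carriers in auto)
  finally show ?thesis .
qed

lemma qform_Cmat:
  "x \<in> carrier_vec (M - 1) \<Longrightarrow> qform x (Cmat M k V) = qform (Ebar M k *\<^sub>v x) (cconj_mat (minv (V k)))"
  unfolding qform_def Cmat_mult_vec using P(1) Ebar_carrier[of M k]
  by (simp add: cscalar_prod_transpose_Ebar)

lemma Cmat_det_nonzero: "det (Cmat M k V) \<noteq> 0"
proof
  assume "det (Cmat M k V) = 0"
  then obtain x where x: "x \<in> carrier_vec (M - 1)" "x \<noteq> 0\<^sub>v (M - 1)" "Cmat M k V *\<^sub>v x = 0\<^sub>v (M - 1)"
    using det_0_iff_vec_prod_zero[OF Cmat_carrier] by auto
  have "qform x (Cmat M k V) = 0" using x unfolding qform_def by simp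
  hence "qform (Ebar M k *\<^sub>v x) (cconj_mat (minv (V k))) = 0" using qform_Cmat[OF x(1)] by simp
  moreover have "Ebar M k *\<^sub>v x \<in> carrier_vec M" "Ebar M k *\<^sub>v x \<noteq> 0\<^sub>v M"
    using Ebar_mult_vec_nonzero[OF k x(1,2)] Ebar_carrier[of M k] x(1) by auto
  ultimately show False using pd_cconj_minv unfolding hermitian_pd_def by fastforce
qed

private lemma Cmat_minv_gvec:
  "minv (Cmat M k V) *\<^sub>v gvec M k V \<in> carrier_vec (M - 1)"
  "Cmat M k V *\<^sub>v (minv (Cmat M k V) *\<^sub>v gvec M k V) = gvec M k V"
  "gvec M k V = transpose_mat (Ebar M k) *\<^sub>v (cconj_mat (minv (V k)) *\<^sub>v unit_vec M k)"
  "gvec M k V \<in> carrier_vec (M - 1)"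
  using minv_inverse(1)[OF Cmat_carrier Cmat_det_nonzero] P(1) Ebar_carrier[of M k]
    mult_minv_mult_vec[OF Cmat_carrier Cmat_det_nonzero]
  unfolding gvec_def by auto

lemma qform_Cmat_shift_expand:
  assumes q: "q \<in> carrier_vec (M - 1)"
  shows "Re (qform (q - minv (Cmat M k V) *\<^sub>v gvec M k V) (Cmat M k V) + zval M k V)
       = Re (qform q (Cmat M k V)) - 2 * Re (cconj_vec q \<bullet> gvec M k V)
         + Re (cconj_mat (minv (V k)) $$ (k, k))"
proof -
  define P E g h where "P = cconj_mat (minv (V k))" and "E = Ebar M k"
    and "g = gvec M k V" and "h = minv (Cmat M k V) *\<^sub>v gvec M k V"
  have E: "E \<in> carrier_mat M (M - 1)" unfolding E_def by (rule Ebar_carrier)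
  have h: "h \<in> carrier_vec (M - 1)" "Cmat M k V *\<^sub>v h = g" and g: "g \<in> carrier_vec (M - 1)"
    using Cmat_minv_gvec unfolding g_def h_def by auto
  have "Re (qform (q - h) (Cmat M k V)) = Re (qform (E *\<^sub>v q - E *\<^sub>v h) P)"
    using qform_Cmat[of "q - h"] q h E by (simp add: mult_minus_distrib_mat_vec E_def P_def)
  also have "\<dots> = Re (qform (E *\<^sub>v q) P) - 2 * Re (cconj_vec (E *\<^sub>v q) \<bullet> (P *\<^sub>v (E *\<^sub>v h)))
      + Re (qform (E *\<^sub>v h) P)"
    using P E q h unfolding P_def by (intro qform_diff_hermitian) auto
  also have "cconj_vec (E *\<^sub>v q) \<bullet> (P *\<^sub>v (E *\<^sub>v h)) = cconj_vec q \<bullet> g"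
    using cscalar_prod_transpose_Ebar[OF q, of "P *\<^sub>v (E *\<^sub>v h)"] Cmat_mult_vec[OF h(1)] h P E
    unfolding E_def P_def by simp
  also have "qform (E *\<^sub>v h) P = cconj_vec h \<bullet> g"
    using qform_Cmat[OF h(1)] h unfolding qform_def E_def P_def by simp
  also have "qform (E *\<^sub>v q) P = qform q (Cmat M k V)"
    using qform_Cmat[OF q] unfolding E_def P_def ..
  finally have "Re (qform (q - h) (Cmat M k V))
      = Re (qform q (Cmat M k V)) - 2 * Re (cconj_vec q \<bullet> g) + Re (cconj_vec h \<bullet> g)" .
  moreover have "Re (zval M k V) = Re (P $$ (k, k)) - Re (cconj_vec g \<bullet> h)"
    unfolding zval_def qform_def P_def g_def h_def by simp
  moreover have "Re (cconj_vec g \<bullet> h) = Re (cconj_vec h \<bullet> g)"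
    by (simp flip: cnj_cscalar_prod[OF h(1) g])
  ultimately show ?thesis unfolding P_def g_def h_def by simp
qed

lemma qform_qtil_minv_expand:
  assumes q: "q \<in> carrier_vec (M - 1)"
  shows "Re (qform (qtil M k q) (minv (V k)))
       = Re (qform q (Cmat M k V)) - 2 * Re (cconj_vec q \<bullet> gvec M k V)
         + Re (cconj_mat (minv (V k)) $$ (k, k))"
proof -
  define P E ek where "P = cconj_mat (minv (V k))" and "E = Ebar M k" and "ek = (unit_vec M k :: complex vec)"
  have E: "E \<in> carrier_mat M (M - 1)" unfolding E_def by (rule Ebar_carrier)
  have ek: "ek \<in> carrier_vec M" unfolding ek_def by simp
  have W: "minv (V k) \<in> carrier_mat M M" using hermitian_pd_minv[OF pd] unfolding hermitian_pd_def by simp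
  have "cconj_vec (E *\<^sub>v cconj_vec q) = E *\<^sub>v q"
    using cconj_mult_mat_vec[OF E, of "cconj_vec q"] q cconj_Ebar unfolding E_def by simp
  hence cq: "cconj_vec (qtil M k q) = ek - E *\<^sub>v q"
    unfolding qtil_def using cconj_vec_diff[of ek M "E *\<^sub>v cconj_vec q"] ek E q
    unfolding ek_def E_def by simp
  have "qform (ek - E *\<^sub>v q) P = cnj (qform (qtil M k q) (minv (V k)))"
    using qform_cconj_mat[OF W, of "cconj_vec (qtil M k q)"] qtil_carrier[OF k q]
    unfolding cq[symmetric] P_def by simp
  hence "Re (qform (qtil M k q) (minv (V k))) = Re (qform (ek - E *\<^sub>v q) P)" by simp
  also have "\<dots> = Re (qform ek P) - 2 * Re (cconj_vec ek \<bullet> (P *\<^sub>v (E *\<^sub>v q))) + Re (qform (E *\<^sub>v q) P)"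
    using P E q ek unfolding P_def by (intro qform_diff_hermitian) auto
  also have "cconj_vec ek \<bullet> (P *\<^sub>v (E *\<^sub>v q)) = cnj (cconj_vec q \<bullet> gvec M k V)"
    using hermitian_cscalar_prod_swap[OF P, of ek "E *\<^sub>v q"] cnj_cscalar_prod[of "E *\<^sub>v q" M "P *\<^sub>v ek"]
      cscalar_prod_transpose_Ebar[OF q, of "P *\<^sub>v ek"] Cmat_minv_gvec(3) P(1) E ek q
    unfolding P_def E_def ek_def by simp
  also have "qform ek P = P $$ (k, k)" unfolding qform_def ek_def using P(1) k by (simp add: P_def)
  also have "qform (E *\<^sub>v q) P = qform q (Cmat M k V)"
    using qform_Cmat[OF q] unfolding E_def P_def ..
  finally show ?thesis unfolding P_def by simp
qed

end

lemma fq_eq_ell2_partial_min_plus_const: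
  assumes k: "k < M" and pd: "\<And>m. m < M \<Longrightarrow> hermitian_pd M (V m)"
  shows "\<exists>c. \<forall>q \<in> carrier_vec (M - 1). fq M k V q = ell2_partial_min M k V q + c"
proof (intro exI ballI)
  fix q :: "complex vec" assume q: "q \<in> carrier_vec (M - 1)"
  show "fq M k V q = ell2_partial_min M k V q
      + ((\<Sum>j\<in>{0..<M - 1}. Re (V (idx k j) $$ (k, idx k j) * cnj (V (idx k j) $$ (k, idx k j))
           / V (idx k j) $$ (k, k) - V (idx k j) $$ (idx k j, idx k j))) - 1)"
    using qform_Amat_shift[where V = V, OF k pd q] qform_Cmat_shift_expand[where V = V, OF k pd[OF k] q]
      qform_qtil_minv_expand[where V = V, OF k pd[OF k] q]
    unfolding fq_def ell2_partial_min_def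
    by simp
qed

lemma ell2_global_minimizer_iff_partial_min:
  assumes k: "k < M" and pd: "hermitian_pd M (V k)" and q: "q \<in> carrier_vec (M - 1)"
  shows "(\<exists>u \<in> carrier_vec M. det (Tk M k u q) \<noteq> 0 \<and>
            (\<forall>u' \<in> carrier_vec M. \<forall>q' \<in> carrier_vec (M - 1).
               det (Tk M k u' q') \<noteq> 0 \<longrightarrow> ell2 M k V u q \<le> ell2 M k V u' q'))
     \<longleftrightarrow> (\<forall>q' \<in> carrier_vec (M - 1). ell2_partial_min M k V q \<le> ell2_partial_min M k V q')"
proof
  assume "\<exists>u \<in> carrier_vec M. det (Tk M k u q) \<noteq> 0 \<and>
    (\<forall>u' \<in> carrier_vec M. \<forall>q' \<in> carrier_vec (M - 1).
       det (Tk M k u' q') \<noteq> 0 \<longrightarrow> ell2 M k V u q \<le> ell2 M k V u' q')"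
  then obtain u where u: "u \<in> carrier_vec M" "det (Tk M k u q) \<noteq> 0"
    and min: "\<And>u' q'. u' \<in> carrier_vec M \<Longrightarrow> q' \<in> carrier_vec (M - 1) \<Longrightarrow>
                det (Tk M k u' q') \<noteq> 0 \<Longrightarrow> ell2 M k V u q \<le> ell2 M k V u' q'"
    by blast
  show "\<forall>q' \<in> carrier_vec (M - 1). ell2_partial_min M k V q \<le> ell2_partial_min M k V q'"
  proof
    fix q' :: "complex vec" assume q': "q' \<in> carrier_vec (M - 1)"
    note argmin = ell2_at_barrier_argmin[where V = V, OF k pd q', of 0]
    have "ell2_partial_min M k V q \<le> ell2 M k V u q" by (rule ell2_partial_min_le[where V = V, OF k pd q u])
    also have "\<dots> \<le> ell2_partial_min M k V q'" using min[OF argmin(1) q' argmin(2)] argmin(3) by simp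
    finally show "ell2_partial_min M k V q \<le> ell2_partial_min M k V q'" .
  qed
next
  assume all: "\<forall>q' \<in> carrier_vec (M - 1). ell2_partial_min M k V q \<le> ell2_partial_min M k V q'"
  note argmin = ell2_at_barrier_argmin[where V = V, OF k pd q, of 0]
  show "\<exists>u \<in> carrier_vec M. det (Tk M k u q) \<noteq> 0 \<and>
    (\<forall>u' \<in> carrier_vec M. \<forall>q' \<in> carrier_vec (M - 1).
       det (Tk M k u' q') \<noteq> 0 \<longrightarrow> ell2 M k V u q \<le> ell2 M k V u' q')"
  proof (intro bexI conjI ballI impI)
    fix u' q' :: "complex vec"
    assume u': "u' \<in> carrier_vec M" and q': "q' \<in> carrier_vec (M - 1)" and det: "det (Tk M k u' q') \<noteq> 0"
    have "ell2 M k V (barrier_argmin (V k) (qtil M k q) 0) q = ell2_partial_min M k V q"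
      by (rule argmin(3))
    also have "\<dots> \<le> ell2_partial_min M k V q'" using all q' by blast
    also have "\<dots> \<le> ell2 M k V u' q'" by (rule ell2_partial_min_le[where V = V, OF k pd q' u' det])
    finally show "ell2 M k V (barrier_argmin (V k) (qtil M k q) 0) q \<le> ell2 M k V u' q'" .
  qed (use argmin in auto)
qed

lemma ell2_global_minimizer_iff:
  assumes k: "k < M" and pd: "\<And>m. m < M \<Longrightarrow> hermitian_pd M (V m)" and q: "q \<in> carrier_vec (M - 1)"
  shows "(\<exists>u \<in> carrier_vec M. det (Tk M k u q) \<noteq> 0 \<and>
            (\<forall>u' \<in> carrier_vec M. \<forall>q' \<in> carrier_vec (M - 1).
               det (Tk M k u' q') \<noteq> 0 \<longrightarrow> ell2 M k V u q \<le> ell2 M k V u' q'))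
     \<longleftrightarrow> (\<forall>q' \<in> carrier_vec (M - 1). fq M k V q \<le> fq M k V q')"
proof -
  obtain c where "\<forall>q \<in> carrier_vec (M - 1). fq M k V q = ell2_partial_min M k V q + c"
    using fq_eq_ell2_partial_min_plus_const[where V = V, OF k pd] by blast
  thus ?thesis
    using ell2_global_minimizer_iff_partial_min[where V = V, OF k pd[OF k] q] q by auto
qed

theorem theorem1:
  fixes M k :: nat and V :: "nat \<Rightarrow> complex mat"
  assumes "M \<ge> 2" and "k < M"
    and "\<And>m. m < M \<Longrightarrow> hermitian_pd M (V m)"
  shows "(\<forall>q \<in> carrier_vec (M - 1). \<forall>u \<in> carrier_vec M.
            (det (Tk M k u q) \<noteq> 0 \<and>
             (\<forall>u' \<in> carrier_vec M. det (Tk M k u' q) \<noteq> 0 \<longrightarrow> ell2 M k V u q \<le> ell2 M k V u' q))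
            \<longleftrightarrow>
            (\<exists>\<theta> \<in> {0..2*pi}. u =
               (exp (\<i> * complex_of_real \<theta>)
                / complex_of_real (sqrt (Re (qform (qtil M k q) (minv (V k))))))
               \<cdot>\<^sub>v (minv (V k) *\<^sub>v qtil M k q)))
       \<and> (\<forall>q \<in> carrier_vec (M - 1).
            (\<exists>u \<in> carrier_vec M. det (Tk M k u q) \<noteq> 0 \<and>
               (\<forall>u' \<in> carrier_vec M. \<forall>q' \<in> carrier_vec (M - 1).
                  det (Tk M k u' q') \<noteq> 0 \<longrightarrow> ell2 M k V u q \<le> ell2 M k V u' q'))
            \<longleftrightarrow> (\<forall>q' \<in> carrier_vec (M - 1). fq M k V q \<le> fq M k V q'))"
proof -
  show ?thesis
    using ell2_minimizer_in_u_iff[where V = V, OF assms(2) assms(3)[OF assms(2)]]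
      ell2_global_minimizer_iff[where V = V, OF assms(2,3)]
    unfolding barrier_argmin_def by blast
qed

end
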